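(* In the lower-bound type system (as defined in the context, which has no primitive contraction rule), for every signature $\Sigma$, annotated context $\Gamma$, variables $x,x_1,x_2\notin\mathrm{dom}(\Gamma)$ (with $x_1\neq x_2$), annotated types $A,B$, and $q,q'\in\mathbb Q_{\ge0}$: if $\Sigma;\Gamma,x_1:A,x_2:A\vdash^{q}_{q'}e:B$ is derivable, then $\Sigma;\Gamma,x:A\vdash^{q}_{q'}\mathrm{share}(x,(x_1,x_2).e):B$ is derivable.
   Context: Expressions (let-normal form; $x,x_i$ are variables, $f$ function identifiers): $e ::= () \mid \mathsf{true}\mid \mathsf{false}\mid n\mid x\mid \mathrm{op}_\diamond(x_1,x_2)\mid \mathrm{app}(f,x)\mid \mathrm{if}(x,e_t,e_f)\mid \mathrm{let}(x,e_1,x.e_2)\mid \mathrm{pair}(x_1,x_2)\mid \mathrm{match}(x,(x_1,x_2).e)\mid \mathsf{nil}\mid \mathrm{cons}(x_1,x_2)\mid\mathrm{match}(x,e_1,(x_h,x_t).e_2)\mid\mathrm{share}(x,(x_1,x_2).e)$, with $\diamond\in\{+,-,*,\mathrm{div},\mathrm{mod},=,<>,<,>,\mathrm{and},\mathrm{or}\}$. Fix arbitrary rational cost constants $K^{\mathrm{unit}},K^{\mathrm{bool}},K^{\mathrm{int}},K^{\mathrm{nil}},K^{\mathrm{var}},K^{\mathrm{op}},K^{\mathrm{app}},K^{\mathrm{let}},K^{\mathrm{cond}},K^{\mathrm{pair}},K^{\mathrm{matchP}},K^{\mathrm{cons}},K^{\mathrm{matchN}},K^{\mathrm{matchL}}$.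 Resource-annotated types: $A ::= \mathsf{unit}\mid\mathsf{bool}\mid\mathsf{int}\mid L^p(A)\mid A*A$ with $p\in\mathbb Q_{\ge0}$. An annotated context $\Gamma$ is a finite map from variables to annotated types; $\Gamma_1,\Gamma_2$ denotes the union of contexts with disjoint domains (contexts are unordered). Sharing relation: $\curlyvee(A\mid A,A)$ for $A\in\{\mathsf{unit},\mathsf{bool},\mathsf{int}\}$; $\curlyvee(A*B\mid A_1*B_1,A_2*B_2)$ if $\curlyvee(A\mid A_1,A_2)$ and $\curlyvee(B\mid B_1,B_2)$; $\curlyvee(L^p(A)\mid L^{p_1}(A_1),L^{p_2}(A_2))$ if $\curlyvee(A\mid A_1,A_2)$ and $p=p_1+p_2$. Subtyping $\preceq$: $A\preceq A$ for atoms; $L^{p_1}(A_1)\preceq L^{p_2}(A_2)$ if $A_1\preceq A_2$ and $p_1\le p_2$; $A_1*B_1\preceq A_2*B_2$ if $A_1\preceq A_2$ and $B_1\preceq B_2$. A signature $\Sigma$ maps function identifiers to nonempty sets of annotated function types $A_1\xrightarrow{q/q'}A_2$ ($q,q'\in\mathbb Q_{\ge0}$). Typing judgements $\Sigma;\Gamma\vdash^{q}_{q'}e:A$ with $q,q'\in\mathbb Q_{\ge0}$ (every annotation in a rule instance must be a nonnegative rational). Syntax-directed rules: $\Sigma;\emptyset\vdash^{K^{\mathrm{unit}}}_0():\mathsf{unit}$; $\Sigma;\emptyset\vdash^{K^{\mathrm{bool}}}_0 b:\mathsf{bool}$; $\Sigma;\emptyset\vdash^{K^{\mathrm{int}}}_0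 n:\mathsf{int}$; $\Sigma;\emptyset\vdash^{K^{\mathrm{nil}}}_0\mathsf{nil}:L^p(A)$; $\Sigma;x:A\vdash^{K^{\mathrm{var}}}_0x:A$; $\Sigma;x_1:\mathsf{bool},x_2:\mathsf{bool}\vdash^{K^{\mathrm{op}}}_0\mathrm{op}_\diamond(x_1,x_2):\mathsf{bool}$ for $\diamond\in\{\mathrm{and},\mathrm{or}\}$; $\Sigma;x_1:\mathsf{int},x_2:\mathsf{int}\vdash^{K^{\mathrm{op}}}_0\mathrm{op}_\diamond(x_1,x_2):\mathsf{bool}$ for comparisons and $:\mathsf{int}$ for $+,-,*,\mathrm{div},\mathrm{mod}$; if $A_1\xrightarrow{q/q'}A_2\in\Sigma(f)$ then $\Sigma;x:A_1\vdash^{q+K^{\mathrm{app}}}_{q'}\mathrm{app}(f,x):A_2$; from $\Sigma;\Gamma_1\vdash^{q-K^{\mathrm{let}}}_{q_1}e_1:A_1$ and $\Sigma;\Gamma_2,x:A_1\vdash^{q_1}_{q'}e_2:A_2$ infer $\Sigma;\Gamma_1,\Gamma_2\vdash^q_{q'}\mathrm{let}(x,e_1,x.e_2):A_2$; from $\Sigma;\Gamma\vdash^{q-K^{\mathrm{cond}}}_{q'}e_t:A$ and $\Sigma;\Gamma\vdash^{q-K^{\mathrm{cond}}}_{q'}e_f:A$ infer $\Sigma;\Gamma,x:\mathsf{bool}\vdash^q_{q'}\mathrm{if}(x,e_t,e_f):A$; $\Sigma;x_1:A_1,x_2:A_2\vdash^{K^{\mathrm{pair}}}_0\mathrm{pair}(x_1,x_2):A_1*A_2$;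 from $\Sigma;\Gamma,x_1:A_1,x_2:A_2\vdash^{q-K^{\mathrm{matchP}}}_{q'}e:A$ infer $\Sigma;\Gamma,x:A_1*A_2\vdash^q_{q'}\mathrm{match}(x,(x_1,x_2).e):A$; $\Sigma;x_h:A,x_t:L^p(A)\vdash^{p+K^{\mathrm{cons}}}_0\mathrm{cons}(x_h,x_t):L^p(A)$; from $\Sigma;\Gamma\vdash^{q-K^{\mathrm{matchN}}}_{q'}e_1:B$ and $\Sigma;\Gamma,x_h:A,x_t:L^p(A)\vdash^{q+p-K^{\mathrm{matchL}}}_{q'}e_2:B$ infer $\Sigma;\Gamma,x:L^p(A)\vdash^q_{q'}\mathrm{match}(x,e_1,(x_h,x_t).e_2):B$; from $\Sigma;\Gamma,x_1:A_1,x_2:A_2\vdash^q_{q'}e:B$ and $\curlyvee(A\mid A_1,A_2)$ infer $\Sigma;\Gamma,x:A\vdash^q_{q'}\mathrm{share}(x,(x_1,x_2).e):B$. Structural rules of the lower-bound system: (Relax) from $\Sigma;\Gamma\vdash^p_{p'}e:A$, $q\ge p$ and $q-p\le q'-p'$ infer $\Sigma;\Gamma\vdash^q_{q'}e:A$; (Weakening) from $\Sigma;\Gamma\vdash^q_{q'}e:B$ and $\curlyvee(A\mid A,A)$ infer $\Sigma;\Gamma,x:A\vdash^q_{q'}e:B$; (Subtype) from $\Sigma;\Gamma\vdash^q_{q'}e:A$ and $A\preceq B$ infer $\Sigma;\Gamma\vdash^q_{q'}e:B$; (Supertype) from $\Sigma;\Gamma,x:B\vdash^q_{q'}e:C$ and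 $A\preceq B$ infer $\Sigma;\Gamma,x:A\vdash^q_{q'}e:C$. *)

theory Defs
  imports Main "HOL.Rat"
begin

datatype binop = OAdd | OSub | OMul | ODiv | OMod | OEq | ONeq | OLt | OGt | OAnd | OOr

text \<open>ELet x e1 e2 = let(x,e1,x.e2); EMatchP x x1 x2 e = match(x,(x1,x2).e);
  EMatchL x e1 xh xt e2 = match(x,e1,(xh,xt).e2); EShare x x1 x2 e = share(x,(x1,x2).e).\<close>
datatype ('v, 'f) expr =
    EUnit
  | EBool bool
  | EInt int
  | EVar 'v
  | EOp binop 'v 'v
  | EApp 'f 'v
  | EIf 'v "('v, 'f) expr" "('v, 'f) expr"
  | ELet 'v "('v, 'f) expr" "('v, 'f) expr"
  | EPair 'v 'v
  | EMatchP 'v 'v 'v "('v, 'f) expr"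
  | ENil
  | ECons 'v 'v
  | EMatchL 'v "('v, 'f) expr" 'v 'v "('v, 'f) expr"
  | EShare 'v 'v 'v "('v, 'f) expr"

text \<open>Resource-annotated types. Annotations are rationals; nonnegativity is
  imposed by wf_ty and enforced in every rule instance.\<close>
datatype ty = TUnit | TBool | TInt | TList rat ty | TPair ty ty

fun wf_ty :: "ty \<Rightarrow> bool" where
  "wf_ty (TList p A) = (0 \<le> p \<and> wf_ty A)"
| "wf_ty (TPair A B) = (wf_ty A \<and> wf_ty B)"
| "wf_ty _ = True"

record costs =
  K_unit :: rat
  K_bool :: rat
  K_int :: rat
  K_nil :: rat
  K_var :: rat
  K_op :: rat
  K_app :: rat
  K_let :: rat
  K_cond :: rat
  K_pair :: rat
  K_matchP :: rat
  K_cons :: rat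
  K_matchN :: rat
  K_matchL :: rat

inductive share_rel :: "ty \<Rightarrow> ty \<Rightarrow> ty \<Rightarrow> bool" where
  share_unit: "share_rel TUnit TUnit TUnit"
| share_bool: "share_rel TBool TBool TBool"
| share_int: "share_rel TInt TInt TInt"
| share_pair: "share_rel A A1 A2 \<Longrightarrow> share_rel B B1 B2 \<Longrightarrow>
    share_rel (TPair A B) (TPair A1 B1) (TPair A2 B2)"
| share_list: "share_rel A A1 A2 \<Longrightarrow> p = p1 + p2 \<Longrightarrow>
    share_rel (TList p A) (TList p1 A1) (TList p2 A2)"

inductive subty :: "ty \<Rightarrow> ty \<Rightarrow> bool" where
  sub_unit: "subty TUnit TUnit"
| sub_bool: "subty TBool TBool"
| sub_int: "subty TInt TInt"
| sub_list: "subty A1 A2 \<Longrightarrow> p1 \<le> p2 \<Longrightarrow> subty (TList p1 A1) (TList p2 A2)"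
| sub_pair: "subty A1 A2 \<Longrightarrow> subty B1 B2 \<Longrightarrow> subty (TPair A1 B1) (TPair A2 B2)"

text \<open>Signature: function identifier to set of annotated function types
  A1 -q/q'-> A2, represented as (A1, q, q', A2).\<close>
type_synonym 'f signature = "'f \<Rightarrow> (ty \<times> rat \<times> rat \<times> ty) set"

text \<open>Annotated contexts are finite partial maps; Gamma,x:A is Gamma(x |-> A) with x not in dom Gamma.
  Side condition ok: every annotation in the rule instance is a nonnegative rational
  (all annotations of premises are conclusions of sub-derivations and hence checked there).\<close>
definition ok :: "('v \<rightharpoonup> ty) \<Rightarrow> rat \<Rightarrow> rat \<Rightarrow> ty \<Rightarrow> bool" where
  "ok \<Gamma> q q' A \<longleftrightarrow> 0 \<le> q \<and> 0 \<le> q' \<and> wf_ty A \<and> (\<forall>B\<in>ran \<Gamma>. wf_ty B)"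

inductive typed :: "costs \<Rightarrow> 'f signature \<Rightarrow> ('v \<rightharpoonup> ty) \<Rightarrow> rat \<Rightarrow> rat \<Rightarrow> ('v, 'f) expr \<Rightarrow> ty \<Rightarrow> bool"
  for K :: costs and \<Sigma> :: "'f signature" where
  T_unit: "ok (Map.empty :: 'v \<rightharpoonup> ty) (K_unit K) 0 TUnit \<Longrightarrow> typed K \<Sigma> Map.empty (K_unit K) 0 EUnit TUnit"
| T_bool: "ok (Map.empty :: 'v \<rightharpoonup> ty) (K_bool K) 0 TBool \<Longrightarrow> typed K \<Sigma> Map.empty (K_bool K) 0 (EBool b) TBool"
| T_int: "ok (Map.empty :: 'v \<rightharpoonup> ty) (K_int K) 0 TInt \<Longrightarrow> typed K \<Sigma> Map.empty (K_int K) 0 (EInt n) TInt"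
| T_nil: "ok (Map.empty :: 'v \<rightharpoonup> ty) (K_nil K) 0 (TList p A) \<Longrightarrow> typed K \<Sigma> Map.empty (K_nil K) 0 ENil (TList p A)"
| T_var: "ok [x \<mapsto> A] (K_var K) 0 A \<Longrightarrow> typed K \<Sigma> [x \<mapsto> A] (K_var K) 0 (EVar x) A"
| T_op_bool: "op \<in> {OAnd, OOr} \<Longrightarrow> x1 \<noteq> x2 \<Longrightarrow> ok [x1 \<mapsto> TBool, x2 \<mapsto> TBool] (K_op K) 0 TBool \<Longrightarrow>
    typed K \<Sigma> [x1 \<mapsto> TBool, x2 \<mapsto> TBool] (K_op K) 0 (EOp op x1 x2) TBool"
| T_op_cmp: "op \<in> {OEq, ONeq, OLt, OGt} \<Longrightarrow> x1 \<noteq> x2 \<Longrightarrow> ok [x1 \<mapsto> TInt, x2 \<mapsto> TInt] (K_op K) 0 TBool \<Longrightarrow>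
    typed K \<Sigma> [x1 \<mapsto> TInt, x2 \<mapsto> TInt] (K_op K) 0 (EOp op x1 x2) TBool"
| T_op_arith: "op \<in> {OAdd, OSub, OMul, ODiv, OMod} \<Longrightarrow> x1 \<noteq> x2 \<Longrightarrow> ok [x1 \<mapsto> TInt, x2 \<mapsto> TInt] (K_op K) 0 TInt \<Longrightarrow>
    typed K \<Sigma> [x1 \<mapsto> TInt, x2 \<mapsto> TInt] (K_op K) 0 (EOp op x1 x2) TInt"
| T_app: "(A1, q, q', A2) \<in> \<Sigma> f \<Longrightarrow> 0 \<le> q \<Longrightarrow> ok [x \<mapsto> A1] (q + K_app K) q' A2 \<Longrightarrow>
    typed K \<Sigma> [x \<mapsto> A1] (q + K_app K) q' (EApp f x) A2"
| T_let: "typed K \<Sigma> \<Gamma>1 (q - K_let K) q1 e1 A1 \<Longrightarrow> typed K \<Sigma> (\<Gamma>2(x \<mapsto> A1)) q1 q' e2 A2 \<Longrightarrow>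
    dom \<Gamma>1 \<inter> dom \<Gamma>2 = {} \<Longrightarrow> x \<notin> dom \<Gamma>2 \<Longrightarrow> ok (\<Gamma>1 ++ \<Gamma>2) q q' A2 \<Longrightarrow>
    typed K \<Sigma> (\<Gamma>1 ++ \<Gamma>2) q q' (ELet x e1 e2) A2"
| T_if: "typed K \<Sigma> \<Gamma> (q - K_cond K) q' et A \<Longrightarrow> typed K \<Sigma> \<Gamma> (q - K_cond K) q' ef A \<Longrightarrow>
    x \<notin> dom \<Gamma> \<Longrightarrow> ok (\<Gamma>(x \<mapsto> TBool)) q q' A \<Longrightarrow>
    typed K \<Sigma> (\<Gamma>(x \<mapsto> TBool)) q q' (EIf x et ef) A"
| T_pair: "x1 \<noteq> x2 \<Longrightarrow> ok [x1 \<mapsto> A1, x2 \<mapsto> A2] (K_pair K) 0 (TPair A1 A2) \<Longrightarrow>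
    typed K \<Sigma> [x1 \<mapsto> A1, x2 \<mapsto> A2] (K_pair K) 0 (EPair x1 x2) (TPair A1 A2)"
| T_matchP: "typed K \<Sigma> (\<Gamma>(x1 \<mapsto> A1, x2 \<mapsto> A2)) (q - K_matchP K) q' e A \<Longrightarrow>
    x1 \<noteq> x2 \<Longrightarrow> x1 \<notin> dom \<Gamma> \<Longrightarrow> x2 \<notin> dom \<Gamma> \<Longrightarrow> x \<notin> dom \<Gamma> \<Longrightarrow>
    ok (\<Gamma>(x \<mapsto> TPair A1 A2)) q q' A \<Longrightarrow>
    typed K \<Sigma> (\<Gamma>(x \<mapsto> TPair A1 A2)) q q' (EMatchP x x1 x2 e) A"
| T_cons: "xh \<noteq> xt \<Longrightarrow> ok [xh \<mapsto> A, xt \<mapsto> TList p A] (p + K_cons K) 0 (TList p A) \<Longrightarrow>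
    typed K \<Sigma> [xh \<mapsto> A, xt \<mapsto> TList p A] (p + K_cons K) 0 (ECons xh xt) (TList p A)"
| T_matchL: "typed K \<Sigma> \<Gamma> (q - K_matchN K) q' e1 B \<Longrightarrow>
    typed K \<Sigma> (\<Gamma>(xh \<mapsto> A, xt \<mapsto> TList p A)) (q + p - K_matchL K) q' e2 B \<Longrightarrow>
    xh \<noteq> xt \<Longrightarrow> xh \<notin> dom \<Gamma> \<Longrightarrow> xt \<notin> dom \<Gamma> \<Longrightarrow> x \<notin> dom \<Gamma> \<Longrightarrow>
    ok (\<Gamma>(x \<mapsto> TList p A)) q q' B \<Longrightarrow>
    typed K \<Sigma> (\<Gamma>(x \<mapsto> TList p A)) q q' (EMatchL x e1 xh xt e2) B"
| T_share: "typed K \<Sigma> (\<Gamma>(x1 \<mapsto> A1, x2 \<mapsto> A2)) q q' e B \<Longrightarrow> share_rel A A1 A2 \<Longrightarrow>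
    x1 \<noteq> x2 \<Longrightarrow> x1 \<notin> dom \<Gamma> \<Longrightarrow> x2 \<notin> dom \<Gamma> \<Longrightarrow> x \<notin> dom \<Gamma> \<Longrightarrow>
    ok (\<Gamma>(x \<mapsto> A)) q q' B \<Longrightarrow>
    typed K \<Sigma> (\<Gamma>(x \<mapsto> A)) q q' (EShare x x1 x2 e) B"
| T_relax: "typed K \<Sigma> \<Gamma> p p' e A \<Longrightarrow> q \<ge> p \<Longrightarrow> q - p \<le> q' - p' \<Longrightarrow> ok \<Gamma> q q' A \<Longrightarrow>
    typed K \<Sigma> \<Gamma> q q' e A"
| T_weak: "typed K \<Sigma> \<Gamma> q q' e B \<Longrightarrow> share_rel A A A \<Longrightarrow> x \<notin> dom \<Gamma> \<Longrightarrow>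
    ok (\<Gamma>(x \<mapsto> A)) q q' B \<Longrightarrow> typed K \<Sigma> (\<Gamma>(x \<mapsto> A)) q q' e B"
| T_subtype: "typed K \<Sigma> \<Gamma> q q' e A \<Longrightarrow> subty A B \<Longrightarrow> ok \<Gamma> q q' B \<Longrightarrow>
    typed K \<Sigma> \<Gamma> q q' e B"
| T_supertype: "typed K \<Sigma> (\<Gamma>(x \<mapsto> B)) q q' e C \<Longrightarrow> subty A B \<Longrightarrow> x \<notin> dom \<Gamma> \<Longrightarrow>
    ok (\<Gamma>(x \<mapsto> A)) q q' C \<Longrightarrow> typed K \<Sigma> (\<Gamma>(x \<mapsto> A)) q q' e C"

end

theory Submission
  imports Defs
begin

text \<open>Without contraction, a type is shared between two copies by giving one copy all of
  its potential and the other none: the zero-potential copy is a subtype of the original,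
  so the Supertype rule lets it replace the second occurrence of A before Share is applied.\<close>

fun zero_potential :: "ty \<Rightarrow> ty" where
  "zero_potential (TList p A) = TList 0 (zero_potential A)"
| "zero_potential (TPair A B) = TPair (zero_potential A) (zero_potential B)"
| "zero_potential A = A"

lemma share_rel_zero_potential: "share_rel A A (zero_potential A)"
  by (induction A) (auto intro: share_rel.intros)

lemma wf_ty_zero_potential: "wf_ty (zero_potential A)"
  by (induction A) auto

lemma subty_zero_potential: "wf_ty A \<Longrightarrow> subty (zero_potential A) A"
  by (induction A) (auto intro: subty.intros)

lemma typed_ok: "typed K \<Sigma> \<Gamma> q q' e A \<Longrightarrow> ok \<Gamma> q q' A"
  by (induction rule: typed.induct) (simp_all del: fun_upd_apply)

lemma ok_fun_upd_iff:
  "y \<notin> dom \<Gamma> \<Longrightarrow> ok (\<Gamma>(y \<mapsto> C)) q q' B \<longleftrightarrow> ok \<Gamma> q q' B \<and> wf_ty C"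
  by (auto simp: ok_def ran_map_upd domIff)

theorem lemma5:
  fixes K :: costs and \<Sigma> :: "'f signature" and \<Gamma> :: "'v \<rightharpoonup> ty"
    and x x1 x2 :: 'v and A B :: ty and q q' :: rat and e :: "('v, 'f) expr"
  assumes "typed K \<Sigma> (\<Gamma>(x1 \<mapsto> A, x2 \<mapsto> A)) q q' e B"
    and "x \<notin> dom \<Gamma>" and "x1 \<notin> dom \<Gamma>" and "x2 \<notin> dom \<Gamma>" and "x1 \<noteq> x2"
    and "0 \<le> q" and "0 \<le> q'"
  shows "typed K \<Sigma> (\<Gamma>(x \<mapsto> A)) q q' (EShare x x1 x2 e) B"
proof -
  have x2_fresh: "x2 \<notin> dom (\<Gamma>(x1 \<mapsto> A))"
    using assms(4,5) by simp
  have "ok (\<Gamma>(x1 \<mapsto> A, x2 \<mapsto> A)) q q' B"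
    using assms(1) by (rule typed_ok)
  then have ok_\<Gamma>: "ok \<Gamma> q q' B" and wf_A: "wf_ty A"
    using ok_fun_upd_iff[OF x2_fresh] ok_fun_upd_iff[OF assms(3)] by auto
  have "typed K \<Sigma> (\<Gamma>(x1 \<mapsto> A, x2 \<mapsto> zero_potential A)) q q' e B"
    using assms(1) subty_zero_potential[OF wf_A] x2_fresh
  proof (rule T_supertype)
    show "ok (\<Gamma>(x1 \<mapsto> A, x2 \<mapsto> zero_potential A)) q q' B"
      using ok_\<Gamma> wf_A wf_ty_zero_potential x2_fresh assms(3) by (simp add: ok_fun_upd_iff)
  qed
  moreover have "ok (\<Gamma>(x \<mapsto> A)) q q' B"
    using ok_\<Gamma> wf_A ok_fun_upd_iff[OF assms(2)] by simp
  ultimately show ?thesis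
    using share_rel_zero_potential assms(2-5) by (blast intro: T_share)
qed

end
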